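(* For $n$ complex alternating matrices $A_1,\ldots,A_n$ of size $n$ and $n-1$ complex symmetric matrices $B_1,\ldots,B_{n-1}$ of size $n$, we have $$\sum_{\sigma\in S_n,\ \tau\in S_{n-1}}\operatorname{sgn}(\sigma)\operatorname{sgn}(\tau)\,A_{\sigma(1)}B_{\tau(1)}A_{\sigma(2)}B_{\tau(2)}\cdots A_{\sigma(n-1)}B_{\tau(n-1)}A_{\sigma(n)}=0.$$
   Context: A matrix $M$ is alternating if ${}^tM=-M$ and symmetric if ${}^tM=M$. *)

theory Defs
  imports "Jordan_Normal_Form.Matrix" "HOL-Combinatorics.Permutations"
begin

definition alternating_mat :: "'a::ring mat \<Rightarrow> bool" where
  "alternating_mat M \<longleftrightarrow> transpose_mat M = - M"

definition symmetric_mat :: "'a::ring mat \<Rightarrow> bool" where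
  "symmetric_mat M \<longleftrightarrow> transpose_mat M = M"

text \<open>Alternating product (0-indexed)
  A (s 0) * B (t 0) * A (s 1) * B (t 1) * ... * B (t (n-2)) * A (s (n-1)).\<close>
definition alt_word :: "(nat \<Rightarrow> 'a::semiring_1 mat) \<Rightarrow> (nat \<Rightarrow> 'a mat) \<Rightarrow>
    (nat \<Rightarrow> nat) \<Rightarrow> (nat \<Rightarrow> nat) \<Rightarrow> nat \<Rightarrow> 'a mat" where
  "alt_word A B s t n = foldr (\<lambda>i M. A (s i) * B (t i) * M) [0..<n-1] (A (s (n-1)))"

end

theory Submission
  imports Defs "Jordan_Normal_Form.Determinant" "HOL-Combinatorics.Cycles" "HOL-Combinatorics.Orbits"
begin

text \<open>
  By multilinearity in the \<open>B\<close>'s and polarization, every symmetric matrix being a combination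
  of rank-one matrices \<open>v v\<^sup>T\<close>, the entry \<open>(i, j)\<close> of the alternating sum becomes a combination
  of sums \<open>\<Sum>\<^sub>\<tau> sgn \<tau> \<Sum>\<^sub>\<sigma> sgn \<sigma> \<Prod>\<^sub>k w\<^sub>k\<^sup>T A\<^sub>\<sigma>\<^sub>(\<^sub>k\<^sub>) w\<^sub>k\<^sub>+\<^sub>1\<close> with \<open>w\<^sub>0 = e\<^sub>i\<close>, \<open>w\<^sub>n = e\<^sub>j\<close> and the
  interior vectors permuted by \<open>\<tau>\<close>. The sum over \<open>\<sigma>\<close> is a determinant, so it suffices that for
  any vectors \<open>w\<^sub>0, \<dots>, w\<^sub>n\<close> the signed sum over all paths from vertex \<open>0\<close> to vertex \<open>n\<close> of these
  determinants vanishes.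

  Closing a path by the edge \<open>n \<rightarrow> 0\<close> makes it a cycle through all vertices. Among all
  permutations \<open>p\<close> of the vertices with \<open>p n = 0\<close>, those with several cycles cancel in pairs:
  reversing a cycle that avoids \<open>0\<close> negates the determinant because the forms \<open>A\<^sub>m\<close> are
  alternating. The sum over all such \<open>p\<close> factors as \<open>G(w) \<cdot> det [w\<^sub>1 \<dots> w\<^sub>n]\<close>; the same
  cancellation for \<open>p n = n\<close> gives \<open>G(w) \<cdot> det [w\<^sub>0 \<dots> w\<^sub>n\<^sub>-\<^sub>1] = 0\<close>, and reversing the order of
  the vertices exchanges the two determinants while changing the path sum only by a sign.
\<close>

lemma sum_delta_pair:
  fixes n :: nat
  assumes "a0 < n" "b0 < n"
  shows "(\<Sum>a\<in>{0..<n}. \<Sum>b\<in>{0..<n}. if a = a0 \<and> b = b0 then f a b else 0) = f a0 b0"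
proof -
  have "(\<Sum>a\<in>{0..<n}. \<Sum>b\<in>{0..<n}. if a = a0 \<and> b = b0 then f a b else 0)
      = (\<Sum>a\<in>{0..<n}. if a = a0 then (\<Sum>b\<in>{0..<n}. if b = b0 then f a b else 0) else 0)"
    by (intro sum.cong refl) auto
  then show ?thesis using assms by simp
qed

lemma sum_PiE_insert:
  assumes "a \<notin> S"
  shows "sum f (PiE (insert a S) T) = (\<Sum>q\<in>T a. \<Sum>g\<in>PiE S T. f (g(a := q)))"
proof -
  have "sum f (PiE (insert a S) T) = sum (f \<circ> (\<lambda>(q, g). g(a := q))) (T a \<times> PiE S T)"
    unfolding PiE_insert_eq by (rule sum.reindex[OF inj_combinator[OF assms]])
  then show ?thesis by (simp add: sum.cartesian_product case_prod_unfold)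
qed

lemma sum_PiE_comp_permutes:
  assumes t: "t permutes I"
  shows "(\<Sum>g\<in>PiE I (\<lambda>_. Q). f g) = (\<Sum>h\<in>PiE I (\<lambda>_. Q). f (h \<circ> t))"
proof (rule sum.reindex_bij_witness[where i = "\<lambda>h. h \<circ> t" and j = "\<lambda>g. g \<circ> Hilbert_Choice.inv t"])
  have t': "Hilbert_Choice.inv t permutes I" by (rule permutes_inv[OF t])
  fix g assume g: "g \<in> PiE I (\<lambda>_. Q)"
  show "g \<circ> Hilbert_Choice.inv t \<circ> t = g" "f (g \<circ> Hilbert_Choice.inv t \<circ> t) = f g"
    by (simp_all add: comp_assoc permutes_inv_o(2)[OF t])
  show "g \<circ> Hilbert_Choice.inv t \<in> PiE I (\<lambda>_. Q)"
    using g permutes_in_image[OF t'] t' by (auto simp: PiE_iff extensional_def permutes_def)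
next
  fix h assume h: "h \<in> PiE I (\<lambda>_. Q)"
  show "h \<circ> t \<circ> Hilbert_Choice.inv t = h" by (simp add: comp_assoc permutes_inv_o(1)[OF t])
  show "h \<circ> t \<in> PiE I (\<lambda>_. Q)"
    using h permutes_in_image[OF t] t by (auto simp: PiE_iff extensional_def permutes_def)
qed

lemma sum_reverse_nesting3:
  "(\<Sum>x\<in>X. \<Sum>y\<in>Y. \<Sum>z\<in>Z. f x y z) = (\<Sum>z\<in>Z. \<Sum>y\<in>Y. \<Sum>x\<in>X. f x y z)"
proof -
  have "(\<Sum>x\<in>X. \<Sum>y\<in>Y. \<Sum>z\<in>Z. f x y z) = (\<Sum>x\<in>X. \<Sum>z\<in>Z. \<Sum>y\<in>Y. f x y z)"
    by (rule sum.cong[OF refl sum.swap])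
  also have "\<dots> = (\<Sum>z\<in>Z. \<Sum>x\<in>X. \<Sum>y\<in>Y. f x y z)" by (rule sum.swap)
  also have "\<dots> = (\<Sum>z\<in>Z. \<Sum>y\<in>Y. \<Sum>x\<in>X. f x y z)" by (rule sum.cong[OF refl sum.swap])
  finally show ?thesis .
qed

lemma sum_eq_zero_sign_reversing_involution:
  fixes f :: "'b \<Rightarrow> 'a::{idom, ring_char_0}"
  assumes "finite X" "\<And>x. x \<in> X \<Longrightarrow> h x \<in> X" "\<And>x. x \<in> X \<Longrightarrow> h (h x) = x"
    and "\<And>x. x \<in> X \<Longrightarrow> f (h x) = - f x"
  shows "sum f X = 0"
proof -
  have "sum (\<lambda>x. - f x) X = sum f X"
    by (rule sum.reindex_bij_witness[where i = h and j = h]) (auto simp: assms)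
  then have "- sum f X = sum f X" by (simp add: sum_negf)
  then have "2 * sum f X = 0" by (metis add.left_inverse mult_2)
  then show ?thesis by simp
qed

lemma det_scale_permute_rows:
  assumes B: "B \<in> carrier_mat n n" and p: "p permutes {0..<n}"
  shows "det (mat n n (\<lambda>(r,m). s r * B $$ (p r, m))) = prod s {0..<n} * (of_int (sign p) * det B)"
proof -
  let ?S = "mat n n (\<lambda>(r,m). s r * B $$ (p r, m))" and ?X = "mat n n (\<lambda>(r,m). B $$ (p r, m))"
  have S: "?S \<in> carrier_mat n n" and X: "?X \<in> carrier_mat n n" by simp_all
  have "det ?S = prod s {0..<n} * det ?X"
    unfolding det_def'[OF S] det_def'[OF X] sum_distrib_left
  proof (rule sum.cong[OF refl])
    fix q assume "q \<in> {q. q permutes {0..<n}}"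
    then have "(\<Prod>i = 0..<n. ?S $$ (i, q i)) = prod s {0..<n} * (\<Prod>i = 0..<n. ?X $$ (i, q i))"
      by (auto simp: prod.distrib permutes_in_image intro!: prod.cong)
    then show "signof q * (\<Prod>i = 0..<n. ?S $$ (i, q i)) = prod s {0..<n} * (signof q * (\<Prod>i = 0..<n. ?X $$ (i, q i)))"
      by simp
  qed
  also have "det ?X = of_int (sign p) * det B" by (rule det_permute_rows[OF B p])
  finally show ?thesis .
qed

lemma det_permute_cols:
  assumes B: "B \<in> carrier_mat m m" and s: "s permutes {0..<m}"
  shows "det (mat m m (\<lambda>(i,j). B $$ (i, s j))) = of_int (sign s) * det B"
proof -
  have Bt: "transpose_mat B \<in> carrier_mat m m" using B by simp
  have eq: "mat m m (\<lambda>(i,j). B $$ (i, s j)) = transpose_mat (mat m m (\<lambda>(i,j). transpose_mat B $$ (s i, j)))"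
    by (rule eq_matI) (use B permutes_in_image[OF s] in auto)
  show ?thesis unfolding eq
    by (subst det_transpose[of _ m]) (auto simp: det_permute_rows[OF Bt s] det_transpose[OF B])
qed

definition bilin :: "nat \<Rightarrow> 'a::comm_ring_1 mat \<Rightarrow> (nat \<Rightarrow> 'a) \<Rightarrow> (nat \<Rightarrow> 'a) \<Rightarrow> 'a" where
  "bilin n M x y = (\<Sum>a<n. \<Sum>b<n. x a * M $$ (a,b) * y b)"

definition row_mult :: "nat \<Rightarrow> (nat \<Rightarrow> 'a::comm_ring_1) \<Rightarrow> 'a mat \<Rightarrow> nat \<Rightarrow> 'a" where
  "row_mult n x M b = (\<Sum>a<n. x a * M $$ (a,b))"

lemma bilin_swap_alternating:
  assumes M: "M \<in> carrier_mat n n" and alt: "alternating_mat M"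
  shows "bilin n M y x = - bilin n M x y"
proof -
  have skew: "M $$ (a,b) = - M $$ (b,a)" if "a < n" "b < n" for a b
  proof -
    have "transpose_mat M $$ (b,a) = (- M) $$ (b,a)"
      using alt by (simp add: alternating_mat_def)
    then show ?thesis using that M by simp
  qed
  have "bilin n M y x = (\<Sum>b<n. \<Sum>a<n. y a * M $$ (a,b) * x b)"
    unfolding bilin_def by (rule sum.swap)
  also have "\<dots> = (\<Sum>b<n. \<Sum>a<n. - (x b * M $$ (b,a) * y a))"
  proof (intro sum.cong refl)
    fix a b assume "b \<in> {..<n}" "a \<in> {..<n}"
    then show "y a * M $$ (a,b) * x b = - (x b * M $$ (b,a) * y a)" using skew[of a b] by simp
  qed
  also have "\<dots> = - bilin n M x y" by (simp add: bilin_def sum_negf)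
  finally show ?thesis .
qed

lemma bilin_eq_row_mult: "bilin n M x y = (\<Sum>b<n. row_mult n x M b * y b)"
  unfolding bilin_def row_mult_def by (subst sum.swap) (simp add: sum_distrib_right)

definition basis_fun :: "nat \<Rightarrow> nat \<Rightarrow> 'a::zero_neq_one" where
  "basis_fun i a = of_bool (a = i)"

lemma bilin_basis_fun:
  assumes "i < n" "j < n"
  shows "bilin n M (basis_fun i) (basis_fun j) = M $$ (i,j)"
proof -
  have "bilin n M (basis_fun i) (basis_fun j)
      = (\<Sum>a<n. if a = i then (\<Sum>b<n. if b = j then M $$ (a,b) else 0) else 0)"
    unfolding bilin_def basis_fun_def by (intro sum.cong refl) auto
  then show ?thesis using assms by simp
qed

lemma bilin_cong_left: "(\<And>a. a < n \<Longrightarrow> x a = x' a) \<Longrightarrow> bilin n M x y = bilin n M x' y"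
  by (simp add: bilin_def)

lemma bilin_sum_left:
  "bilin n M (\<lambda>a. \<Sum>q\<in>Q. c q * u q a) y = (\<Sum>q\<in>Q. c q * bilin n M (u q) y)"
proof -
  have "bilin n M (\<lambda>a. \<Sum>q\<in>Q. c q * u q a) y = (\<Sum>a<n. \<Sum>b<n. \<Sum>q\<in>Q. c q * u q a * M $$ (a,b) * y b)"
    unfolding bilin_def by (simp add: sum_distrib_right)
  also have "\<dots> = (\<Sum>q\<in>Q. \<Sum>a<n. \<Sum>b<n. c q * (u q a * M $$ (a,b) * y b))"
    by (simp add: sum.swap[where B=Q] mult.assoc)
  finally show ?thesis by (simp add: bilin_def sum_distrib_left)
qed

lemma row_mult_mult:
  assumes M: "M \<in> carrier_mat n n" and N: "N \<in> carrier_mat n n" and b: "b < n"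
  shows "row_mult n x (M * N) b = row_mult n (row_mult n x M) N b"
proof -
  have "row_mult n x (M * N) b = (\<Sum>a<n. \<Sum>c<n. x a * M $$ (a,c) * N $$ (c,b))"
    unfolding row_mult_def using M N b
    by (intro sum.cong refl) (simp add: scalar_prod_def sum_distrib_left ac_simps lessThan_atLeast0)
  also have "\<dots> = row_mult n (row_mult n x M) N b"
    unfolding row_mult_def by (subst sum.swap) (simp add: sum_distrib_right)
  finally show ?thesis .
qed

lemma bilin_mult:
  assumes "M \<in> carrier_mat n n" "N \<in> carrier_mat n n"
  shows "bilin n (M * N) x y = bilin n N (row_mult n x M) y"
  using assms by (simp add: bilin_eq_row_mult row_mult_mult)

lemma bilin_mult_rank_one_sum:
  assumes M: "M \<in> carrier_mat n n" and B: "B \<in> carrier_mat n n" and W: "W \<in> carrier_mat n n"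
    and B_decomp: "\<And>a b. a < n \<Longrightarrow> b < n \<Longrightarrow> B $$ (a,b) = (\<Sum>q\<in>Q. c q * v q a * v q b)"
  shows "bilin n (M * B * W) x y = (\<Sum>q\<in>Q. c q * bilin n M x (v q) * bilin n W (v q) y)"
proof -
  have row: "row_mult n x (M * B) b = (\<Sum>q\<in>Q. (c q * bilin n M x (v q)) * v q b)" if "b < n" for b
  proof -
    have "row_mult n x (M * B) b = (\<Sum>a<n. \<Sum>q\<in>Q. row_mult n x M a * (c q * v q a * v q b))"
      unfolding row_mult_mult[OF M B that] row_mult_def[of n "row_mult n x M"]
      by (intro sum.cong refl) (simp add: B_decomp that sum_distrib_left)
    also have "\<dots> = (\<Sum>q\<in>Q. (c q * bilin n M x (v q)) * v q b)"
      by (subst sum.swap) (simp add: bilin_eq_row_mult sum_distrib_left sum_distrib_right ac_simps)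
    finally show ?thesis .
  qed
  have "bilin n (M * B * W) x y = bilin n W (\<lambda>b. \<Sum>q\<in>Q. (c q * bilin n M x (v q)) * v q b) y"
    unfolding bilin_mult[OF mult_carrier_mat[OF M B] W] by (rule bilin_cong_left) (rule row)
  then show ?thesis by (simp add: bilin_sum_left)
qed

text \<open>Polarization: \<open>(e\<^sub>a + e\<^sub>b)(e\<^sub>a + e\<^sub>b)\<^sup>T - (e\<^sub>a - e\<^sub>b)(e\<^sub>a - e\<^sub>b)\<^sup>T =
  2 (e\<^sub>a e\<^sub>b\<^sup>T + e\<^sub>b e\<^sub>a\<^sup>T)\<close>, so a symmetric matrix is a combination of the rank-one matrices
  \<open>v v\<^sup>T\<close> with \<open>v = e\<^sub>a \<plusminus> e\<^sub>b\<close>.\<close>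

definition polar_index :: "nat \<Rightarrow> (nat \<times> nat \<times> bool) set" where
  "polar_index n = {0..<n} \<times> {0..<n} \<times> UNIV"

definition polar_vec :: "nat \<times> nat \<times> bool \<Rightarrow> nat \<Rightarrow> 'a::comm_ring_1" where
  "polar_vec q x = (case q of (a, b, s) \<Rightarrow> of_bool (x = a) + (if s then 1 else -1) * of_bool (x = b))"

definition polar_coeff :: "'a::field mat \<Rightarrow> nat \<times> nat \<times> bool \<Rightarrow> 'a" where
  "polar_coeff B q = (case q of (a, b, s) \<Rightarrow> (if s then 1 else -1) * B $$ (a,b) / 4)"

lemma symmetric_mat_polarization:
  fixes B :: "'a::field_char_0 mat"
  assumes B: "B \<in> carrier_mat n n" and sym: "symmetric_mat B" and x: "x < n" and y: "y < n"
  shows "B $$ (x,y) = (\<Sum>q\<in>polar_index n. polar_coeff B q * polar_vec q x * polar_vec q y)"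
proof -
  have "B $$ (y,x) = transpose_mat B $$ (x,y)" using B x y by simp
  also have "\<dots> = B $$ (x,y)" using sym by (simp add: symmetric_mat_def)
  finally have Byx: "B $$ (y,x) = B $$ (x,y)" .
  have pair: "(\<Sum>s\<in>UNIV. polar_coeff B (a,b,s) * polar_vec (a,b,s) x * polar_vec (a,b,s) y)
      = (if a = x \<and> b = y then B $$ (a,b) / 2 else 0) + (if a = y \<and> b = x then B $$ (a,b) / 2 else 0)"
    for a b
    by (cases "x = a"; cases "x = b"; cases "y = a"; cases "y = b")
       (simp_all add: UNIV_bool polar_coeff_def polar_vec_def field_simps)
  have "(\<Sum>q\<in>polar_index n. polar_coeff B q * polar_vec q x * polar_vec q y)
      = (\<Sum>a\<in>{0..<n}. \<Sum>b\<in>{0..<n}. \<Sum>s\<in>UNIV. polar_coeff B (a,b,s) * polar_vec (a,b,s) x * polar_vec (a,b,s) y)"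
    unfolding polar_index_def by (simp add: sum.cartesian_product)
  also have "\<dots> = (\<Sum>a\<in>{0..<n}. \<Sum>b\<in>{0..<n}. (if a = x \<and> b = y then B $$ (a,b) / 2 else 0)
                      + (if a = y \<and> b = x then B $$ (a,b) / 2 else 0))"
    by (simp only: pair)
  also have "\<dots> = B $$ (x,y) / 2 + B $$ (y,x) / 2"
    unfolding sum.distrib using x y by (simp only: sum_delta_pair)
  also have "\<dots> = B $$ (x,y)" using Byx by simp
  finally show ?thesis ..
qed

section \<open>Expanding an alternating word\<close>

definition alt_word_from :: "(nat \<Rightarrow> 'a::semiring_1 mat) \<Rightarrow> (nat \<Rightarrow> 'a mat) \<Rightarrow> nat \<Rightarrow> nat \<Rightarrow> 'a mat" where
  "alt_word_from A B N a = foldr (\<lambda>i M. A i * B i * M) [a..<N] (A N)"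

lemma alt_word_from_step: "a < N \<Longrightarrow> alt_word_from A B N a = A a * B a * alt_word_from A B N (Suc a)"
  by (simp add: alt_word_from_def upt_conv_Cons)

lemma alt_word_from_last: "alt_word_from A B N N = A N"
  by (simp add: alt_word_from_def)

lemma alt_word_from_carrier:
  assumes "\<And>k. k \<le> N \<Longrightarrow> A k \<in> carrier_mat n n" "\<And>k. k < N \<Longrightarrow> B k \<in> carrier_mat n n"
  shows "a \<le> N \<Longrightarrow> alt_word_from A B N a \<in> carrier_mat n n"
proof (induction "N - a" arbitrary: a)
  case 0
  then show ?case using assms by (simp add: alt_word_from_last)
next
  case (Suc m)
  then have "a < N" "alt_word_from A B N (Suc a) \<in> carrier_mat n n" by simp_all
  then show ?case using assms(1)[of a] assms(2)[of a] by (auto simp: alt_word_from_step intro!: mult_carrier_mat)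
qed

text \<open>\<open>g k\<close> selects the rank-one term \<open>v v\<^sup>T\<close> used for the factor \<open>B k\<close>; its vector sits at
  vertex \<open>k + 1\<close> of the walk.\<close>

definition walk :: "('q \<Rightarrow> nat \<Rightarrow> 'a) \<Rightarrow> (nat \<Rightarrow> 'a) \<Rightarrow> (nat \<Rightarrow> 'a) \<Rightarrow> nat \<Rightarrow> (nat \<Rightarrow> 'q) \<Rightarrow> nat \<Rightarrow> nat \<Rightarrow> nat \<Rightarrow> 'a" where
  "walk v x y N g a k = (if k = a then x else if k \<le> N then v (g (k - 1)) else y)"

lemma walk_fun_upd:
  assumes "a < N"
  shows "walk v x y N (g(a := q)) a a = x" "walk v x y N (g(a := q)) a (Suc a) = v q"
    and "Suc a \<le> k \<Longrightarrow> walk v x y N (g(a := q)) a k = walk v (v q) y N g (Suc a) k"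
  using assms by (auto simp: walk_def)

lemma bilin_alt_word_from_expansion:
  assumes A: "\<And>k. k \<le> N \<Longrightarrow> A k \<in> carrier_mat n n" and B: "\<And>k. k < N \<Longrightarrow> B k \<in> carrier_mat n n"
    and B_decomp: "\<And>k a b. k < N \<Longrightarrow> a < n \<Longrightarrow> b < n \<Longrightarrow> B k $$ (a,b) = (\<Sum>q\<in>Q. c k q * v q a * v q b)"
  shows "a \<le> N \<Longrightarrow> bilin n (alt_word_from A B N a) x y =
    (\<Sum>g\<in>PiE {a..<N} (\<lambda>_. Q). (\<Prod>k\<in>{a..<N}. c k (g k)) *
       (\<Prod>k\<in>{a..N}. bilin n (A k) (walk v x y N g a k) (walk v x y N g a (Suc k))))"
proof (induction "N - a" arbitrary: a x)
  case 0
  then show ?case by (simp add: alt_word_from_last walk_def)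
next
  case (Suc m)
  then have a: "a < N" by simp
  define T where "T a' x' g = (\<Prod>k\<in>{a'..<N}. c k (g k)) *
       (\<Prod>k\<in>{a'..N}. bilin n (A k) (walk v x' y N g a' k) (walk v x' y N g a' (Suc k)))" for a' x' g
  have insert: "{a..<N} = insert a {Suc a..<N}" "{a..N} = insert a {Suc a..N}" using a by auto
  have "bilin n (alt_word_from A B N a) x y
      = (\<Sum>q\<in>Q. c a q * bilin n (A a) x (v q) * bilin n (alt_word_from A B N (Suc a)) (v q) y)"
    unfolding alt_word_from_step[OF a]
    by (rule bilin_mult_rank_one_sum) (use A B B_decomp a alt_word_from_carrier[OF A B] in auto)
  also have "\<dots> = (\<Sum>q\<in>Q. \<Sum>g\<in>PiE {Suc a..<N} (\<lambda>_. Q). c a q * bilin n (A a) x (v q) * T (Suc a) (v q) g)"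
    using Suc by (simp add: T_def sum_distrib_left)
  also have "\<dots> = (\<Sum>q\<in>Q. \<Sum>g\<in>PiE {Suc a..<N} (\<lambda>_. Q). T a x (g(a := q)))"
  proof (intro sum.cong refl)
    fix q g
    have "(\<Prod>k\<in>{a..<N}. c k ((g(a := q)) k)) = c a q * (\<Prod>k\<in>{Suc a..<N}. c k (g k))"
      unfolding insert(1) by (subst prod.insert) (auto intro!: prod.cong)
    moreover have "(\<Prod>k\<in>{a..N}. bilin n (A k) (walk v x y N (g(a := q)) a k)
                                       (walk v x y N (g(a := q)) a (Suc k)))
        = bilin n (A a) x (v q) * (\<Prod>k\<in>{Suc a..N}. bilin n (A k) (walk v (v q) y N g (Suc a) k)
                                                         (walk v (v q) y N g (Suc a) (Suc k)))"
      unfolding insert(2) using walk_fun_upd[OF a, where v = v and x = x and y = y and g = g and q = q]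
      by (subst prod.insert) (auto intro!: prod.cong)
    ultimately show "c a q * bilin n (A a) x (v q) * T (Suc a) (v q) g = T a x (g(a := q))"
      by (simp add: T_def ac_simps)
  qed
  also have "\<dots> = (\<Sum>g\<in>PiE {a..<N} (\<lambda>_. Q). T a x g)"
    unfolding insert(1) by (rule sum_PiE_insert[symmetric]) simp
  finally show ?case by (simp add: T_def)
qed

section \<open>Reversing a cycle\<close>

lemma sign_cycle_of_list:
  "distinct cs \<Longrightarrow> sign (cycle_of_list cs) = (-1) ^ (length cs - 1)"
proof (induction cs rule: cycle_of_list.induct)
  case (1 i j cs)
  have "sign (cycle_of_list (i # j # cs)) = sign (transpose i j) * sign (cycle_of_list (j # cs))"
    by (simp add: sign_compose permutation_of_cycle permutation_swap_id)
  also have "\<dots> = (-1) ^ (length (i # j # cs) - 1)" using 1 by (simp add: sign_swap_id)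
  finally show ?case .
qed (auto simp: sign_id)

lemma sign_perm_restrict_orbit:
  assumes p: "permutation p"
  shows "sign (perm_restrict p (orbit p a)) = (-1) ^ (card (orbit p a) - 1)"
proof -
  have set: "set (support p a) = orbit p a"
    using support_set[OF p, of a] orbit_altdef_permutation[OF p, of a] by auto
  have distinct: "distinct (support p a)" by (rule cycle_of_permutation[OF p])
  have "perm_restrict p (orbit p a) = cycle_of_list (support p a)"
  proof
    fix x show "perm_restrict p (orbit p a) x = cycle_of_list (support p a) x"
    proof (cases "x \<in> orbit p a")
      case True
      then show ?thesis using cycle_restrict[OF p, of x a] set by (simp add: perm_restrict_simps)
    next
      case False
      then show ?thesis using id_outside_supp[of x "support p a"] set by (simp add: perm_restrict_simps)
    qed
  qed
  moreover have "card (orbit p a) = length (support p a)"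
    using distinct_card[OF distinct] set by simp
  ultimately show ?thesis using sign_cycle_of_list[OF distinct] by simp
qed

definition inv_on_orbit :: "('a \<Rightarrow> 'a) \<Rightarrow> 'a \<Rightarrow> 'a \<Rightarrow> 'a" where
  "inv_on_orbit p a = perm_restrict (Hilbert_Choice.inv p) (orbit p a)"

definition reverse_cycle :: "('a \<Rightarrow> 'a) \<Rightarrow> 'a \<Rightarrow> 'a \<Rightarrow> 'a" where
  "reverse_cycle p a = (\<lambda>x. if x \<in> orbit p a then Hilbert_Choice.inv p x else p x)"

context
  fixes p :: "'a \<Rightarrow> 'a" and S :: "'a set" and a :: 'a
  assumes p: "p permutes S" and S: "finite S"
begin

private lemma permutation_of_permutes_finite: "permutation p"
  using p S by (auto simp: permutation_permutes)

private lemma orbit_inv: "orbit (Hilbert_Choice.inv p) a = orbit p a"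
  by (rule orbit_inv_eq[OF permutation_of_permutes_finite])

lemma inv_in_orbit: "x \<in> orbit p a \<Longrightarrow> Hilbert_Choice.inv p x \<in> orbit p a"
  using orbit.step[of x "Hilbert_Choice.inv p" a] orbit_inv by simp

lemma self_in_orbit: "a \<in> orbit p a"
  by (rule permutation_self_in_orbit[OF permutation_of_permutes_finite])

lemma orbit_disjoint: "x \<notin> orbit p a \<Longrightarrow> orbit p x \<inter> orbit p a = {}"
proof (rule ccontr)
  assume x: "x \<notin> orbit p a" and "orbit p x \<inter> orbit p a \<noteq> {}"
  then obtain y where y: "y \<in> orbit p x" "y \<in> orbit p a" by auto
  have "x \<in> orbit p y"
    by (rule orbit_swap[OF permutation_self_in_orbit[OF permutation_of_permutes_finite] y(1)])
  then have "x \<in> orbit p a" by (rule orbit_trans[OF _ y(2)])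
  with x show False by simp
qed

lemma inv_on_orbit_permutes: "inv_on_orbit p a permutes orbit p a"
proof (rule bij_imp_permutes)
  show "bij_betw (inv_on_orbit p a) (orbit p a) (orbit p a)"
  proof (rule bij_betw_byWitness[where f' = "perm_restrict p (orbit p a)"])
    show "\<forall>x\<in>orbit p a. perm_restrict p (orbit p a) (inv_on_orbit p a x) = x"
      using inv_in_orbit by (simp add: inv_on_orbit_def perm_restrict_simps permutes_inverses(1)[OF p])
    show "\<forall>x\<in>orbit p a. inv_on_orbit p a (perm_restrict p (orbit p a) x) = x"
      using orbit.step[of _ p a] by (simp add: inv_on_orbit_def perm_restrict_simps permutes_inverses(2)[OF p])
    show "inv_on_orbit p a ` orbit p a \<subseteq> orbit p a"
      using inv_in_orbit by (auto simp: inv_on_orbit_def perm_restrict_simps)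
    show "perm_restrict p (orbit p a) ` orbit p a \<subseteq> orbit p a"
      using orbit.step[of _ p a] by (auto simp: perm_restrict_simps)
  qed
qed (simp add: inv_on_orbit_def perm_restrict_simps)

lemma sign_inv_on_orbit: "sign (inv_on_orbit p a) = (-1) ^ (card (orbit p a) - 1)"
  using sign_perm_restrict_orbit[of "Hilbert_Choice.inv p" a] orbit_inv permutation_of_permutes_finite
  by (simp add: inv_on_orbit_def permutation_inverse)

lemma reverse_cycle_eq: "reverse_cycle p a = p \<circ> inv_on_orbit p a \<circ> inv_on_orbit p a"
proof
  fix x show "reverse_cycle p a x = (p \<circ> inv_on_orbit p a \<circ> inv_on_orbit p a) x"
  proof (cases "x \<in> orbit p a")
    case True
    then have "Hilbert_Choice.inv p x \<in> orbit p a" by (rule inv_in_orbit)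
    with True show ?thesis
      by (simp add: reverse_cycle_def inv_on_orbit_def perm_restrict_simps permutes_inverses(1)[OF p])
  qed (simp add: reverse_cycle_def inv_on_orbit_def perm_restrict_simps)
qed

lemma reverse_cycle_permutes: "a \<in> S \<Longrightarrow> reverse_cycle p a permutes S"
  using permutes_subset[OF inv_on_orbit_permutes permutes_orbit_subset[OF p]]
  by (simp add: reverse_cycle_eq permutes_compose p)

lemma sign_reverse_cycle: "a \<in> S \<Longrightarrow> sign (reverse_cycle p a) = sign p"
proof -
  assume a: "a \<in> S"
  have r: "permutation (inv_on_orbit p a)"
    using permutes_subset[OF inv_on_orbit_permutes permutes_orbit_subset[OF p a]] S
    by (auto simp: permutation_permutes)
  have "sign (reverse_cycle p a) = sign p * (sign (inv_on_orbit p a) * sign (inv_on_orbit p a))"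
    by (simp add: reverse_cycle_eq sign_compose permutation_compose permutation_of_permutes_finite r)
  then show ?thesis by (simp add: sign_def)
qed

lemma orbit_reverse_cycle: "orbit (reverse_cycle p a) a = orbit p a"
proof -
  have "orbit (reverse_cycle p a) a = orbit (Hilbert_Choice.inv p) a"
  proof (rule orbit_cong)
    show "a \<in> orbit (Hilbert_Choice.inv p) a"
      using self_in_orbit orbit_inv by simp
    show "reverse_cycle p a x = Hilbert_Choice.inv p x" if "x \<in> orbit (Hilbert_Choice.inv p) a" for x
      using that orbit_inv by (simp add: reverse_cycle_def)
  qed
  then show ?thesis using orbit_inv by simp
qed

lemma orbit_reverse_cycle_other: "x \<notin> orbit p a \<Longrightarrow> orbit (reverse_cycle p a) x = orbit p x"
proof (rule orbit_cong[OF permutation_self_in_orbit[OF permutation_of_permutes_finite]])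
  fix y assume "x \<notin> orbit p a" "y \<in> orbit p x"
  then have "y \<notin> orbit p a" using orbit_disjoint by blast
  then show "reverse_cycle p a y = p y" by (simp add: reverse_cycle_def)
qed

lemma reverse_cycle_reverse_cycle: "a \<in> S \<Longrightarrow> reverse_cycle (reverse_cycle p a) a = p"
proof
  fix x assume a: "a \<in> S"
  show "reverse_cycle (reverse_cycle p a) a x = p x"
  proof (cases "x \<in> orbit p a")
    case True
    then have "reverse_cycle p a (p x) = x"
      by (simp add: reverse_cycle_def orbit.step[OF True] permutes_inverses(2)[OF p])
    then have "Hilbert_Choice.inv (reverse_cycle p a) x = p x"
      using permutes_inv_eq[OF reverse_cycle_permutes[OF a]] by blast
    then show ?thesis using True by (simp add: reverse_cycle_def[of "reverse_cycle p a"] orbit_reverse_cycle)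
  next
    case False
    then show ?thesis
      by (simp add: reverse_cycle_def[of "reverse_cycle p a"] orbit_reverse_cycle) (simp add: reverse_cycle_def)
  qed
qed

end

section \<open>Edge determinants\<close>

text \<open>The vertices \<open>0, \<dots>, n\<close> carry vectors \<open>w\<close>, and a permutation \<open>p\<close> of the vertices is
  read as the set of edges \<open>r \<rightarrow> p r\<close>. Row \<open>r\<close> pairs the edge leaving \<open>r\<close> with each form
  \<open>A m\<close>; the edge leaving \<open>n\<close> has no row.\<close>

definition edge_mat :: "nat \<Rightarrow> (nat \<Rightarrow> 'a::comm_ring_1 mat) \<Rightarrow> (nat \<Rightarrow> nat \<Rightarrow> 'a) \<Rightarrow> (nat \<Rightarrow> nat) \<Rightarrow> 'a mat" where
  "edge_mat n A w p = mat n n (\<lambda>(r,m). bilin n (A m) (w r) (w (p r)))"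

lemma edge_mat_carrier [simp]: "edge_mat n A w p \<in> carrier_mat n n"
  by (simp add: edge_mat_def)

text \<open>Reversing a cycle inside the rows negates the rows of the cycle (the forms are alternating)
  and permutes them cyclically; the two signs \<open>(-1)\<^sup>k\<close> and \<open>(-1)\<^sup>k\<^sup>-\<^sup>1\<close> multiply to \<open>-1\<close>.\<close>

lemma det_edge_mat_reverse_cycle:
  fixes A :: "nat \<Rightarrow> 'a::comm_ring_1 mat"
  assumes p: "p permutes {0..<Suc n}" and orbit: "orbit p a \<subseteq> {0..<n}"
    and A: "\<And>m. m < n \<Longrightarrow> A m \<in> carrier_mat n n \<and> alternating_mat (A m)"
  shows "det (edge_mat n A w (reverse_cycle p a)) = - det (edge_mat n A w p)"
proof -
  let ?O = "orbit p a" and ?\<rho> = "inv_on_orbit p a"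
  have fin: "finite {0..<Suc n}" by simp
  have \<rho>: "?\<rho> permutes {0..<n}" by (rule permutes_subset[OF inv_on_orbit_permutes[OF p fin] orbit])
  have "a \<in> ?O" by (rule self_in_orbit[OF p fin])
  then have card: "card ?O = Suc (card ?O - 1)"
    using orbit finite_subset[OF orbit] by (cases "card ?O") auto
  define s where "s r = (if r \<in> ?O then -1 else 1 :: 'a)" for r
  have eq: "edge_mat n A w (reverse_cycle p a) = mat n n (\<lambda>(r,m). s r * edge_mat n A w p $$ (?\<rho> r, m))"
    (is "_ = ?M")
  proof (rule eq_matI)
    fix r m assume "r < dim_row ?M" "m < dim_col ?M"
    then have r: "r < n" and m: "m < n" by auto
    show "edge_mat n A w (reverse_cycle p a) $$ (r, m) = ?M $$ (r, m)"
    proof (cases "r \<in> ?O")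
      case True
      have "Hilbert_Choice.inv p r \<in> ?O" by (rule inv_in_orbit[OF p fin True])
      then have "Hilbert_Choice.inv p r < n" "?\<rho> r = Hilbert_Choice.inv p r"
        using orbit True by (auto simp: inv_on_orbit_def perm_restrict_simps)
      moreover have "p (Hilbert_Choice.inv p r) = r" by (rule permutes_inverses(1)[OF p])
      moreover have "bilin n (A m) (w r) (w (Hilbert_Choice.inv p r))
          = - bilin n (A m) (w (Hilbert_Choice.inv p r)) (w r)"
        using bilin_swap_alternating A[OF m] by blast
      ultimately show ?thesis using r m True by (simp add: edge_mat_def reverse_cycle_def s_def)
    next
      case False
      then show ?thesis
        using r m by (simp add: edge_mat_def reverse_cycle_def s_def inv_on_orbit_def perm_restrict_simps)
    qed
  qed (auto simp: edge_mat_def)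
  have "prod s {0..<n} = (\<Prod>r\<in>{0..<n} \<inter> ?O. -1) * (\<Prod>r\<in>{0..<n} - ?O. 1)"
    unfolding s_def by (simp add: prod.If_cases Diff_eq)
  also have "{0..<n} \<inter> ?O = ?O" using orbit by auto
  finally have "prod s {0..<n} = (-1) ^ card ?O" by simp
  then have "det (edge_mat n A w (reverse_cycle p a))
      = (-1) ^ card ?O * (-1) ^ (card ?O - 1) * det (edge_mat n A w p)"
    unfolding eq det_scale_permute_rows[OF edge_mat_carrier \<rho>] sign_inv_on_orbit[OF p fin] by simp
  also have "(-1) ^ card ?O * (-1) ^ (card ?O - 1) = (-1 :: 'a)"
    by (subst card) (simp add: power_add[symmetric])
  finally show ?thesis by simp
qed

lemma edge_sum_eq_zero_by_cycle_reversal: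
  fixes A :: "nat \<Rightarrow> 'a::{idom, ring_char_0} mat"
  assumes A: "\<And>m. m < n \<Longrightarrow> A m \<in> carrier_mat n n \<and> alternating_mat (A m)"
    and P: "finite P" "\<And>p. p \<in> P \<Longrightarrow> p permutes {0..<Suc n}"
    and c_orbit: "\<And>p. p \<in> P \<Longrightarrow> orbit p (c p) \<subseteq> {0..<n}"
    and c_closed: "\<And>p. p \<in> P \<Longrightarrow> reverse_cycle p (c p) \<in> P"
    and c_stable: "\<And>p. p \<in> P \<Longrightarrow> c (reverse_cycle p (c p)) = c p"
  shows "(\<Sum>p\<in>P. of_int (sign p) * det (edge_mat n A w p)) = 0"
proof (rule sum_eq_zero_sign_reversing_involution[where h = "\<lambda>p. reverse_cycle p (c p)"])
  fix p assume p: "p \<in> P"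
  have fin: "finite {0..<Suc n}" by simp
  have c: "c p \<in> {0..<Suc n}" using c_orbit[OF p] self_in_orbit[OF P(2)[OF p] fin, of "c p"] by auto
  show "reverse_cycle p (c p) \<in> P" by (rule c_closed[OF p])
  show "reverse_cycle (reverse_cycle p (c p)) (c (reverse_cycle p (c p))) = p"
    using reverse_cycle_reverse_cycle[OF P(2)[OF p] fin c] c_stable[OF p] by simp
  show "of_int (sign (reverse_cycle p (c p))) * det (edge_mat n A w (reverse_cycle p (c p)))
      = - (of_int (sign p) * det (edge_mat n A w p))"
    using sign_reverse_cycle[OF P(2)[OF p] fin c] det_edge_mat_reverse_cycle[OF P(2)[OF p] c_orbit[OF p] A]
    by simp
qed (rule P(1))

lemma edge_sum_fixed_last_eq_zero:
  fixes A :: "nat \<Rightarrow> 'a::{idom, ring_char_0} mat"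
  assumes n: "n \<ge> 1" and A: "\<And>m. m < n \<Longrightarrow> A m \<in> carrier_mat n n \<and> alternating_mat (A m)"
  shows "(\<Sum>p\<in>{p. p permutes {0..<Suc n} \<and> p n = n}. of_int (sign p) * det (edge_mat n A w p)) = 0"
proof (rule edge_sum_eq_zero_by_cycle_reversal[OF A, where c = "\<lambda>_. 0"])
  let ?P = "{p. p permutes {0..<Suc n} \<and> p n = n}"
  have fin: "finite {0..<Suc n}" by simp
  show "finite ?P" by (rule finite_subset[OF _ finite_permutations[OF fin]]) auto
  have orbit: "orbit p 0 \<subseteq> {0..<n}" if p: "p \<in> ?P" for p
  proof -
    have "n \<notin> orbit p 0"
    proof
      assume "n \<in> orbit p 0"
      then have "0 \<in> orbit p n"
        using orbit_swap[OF self_in_orbit[OF _ fin]] p by blast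
      then show False using p n by (simp add: orbit_eq_singleton_iff[THEN iffD2])
    qed
    then show ?thesis using permutes_orbit_subset[of p "{0..<Suc n}" 0] p by (auto simp: atLeastLessThanSuc)
  qed
  fix p assume p: "p \<in> ?P"
  show "p permutes {0..<Suc n}" using p by simp
  show "orbit p 0 \<subseteq> {0..<n}" by (rule orbit[OF p])
  show "reverse_cycle p 0 \<in> ?P"
    using reverse_cycle_permutes[of p _ 0] orbit[OF p] p by (auto simp: reverse_cycle_def)
qed simp_all

lemma edge_sum_broken_cycles_eq_zero:
  fixes A :: "nat \<Rightarrow> 'a::{idom, ring_char_0} mat"
  assumes A: "\<And>m. m < n \<Longrightarrow> A m \<in> carrier_mat n n \<and> alternating_mat (A m)"
  shows "(\<Sum>p\<in>{p. p permutes {0..<Suc n} \<and> p n = 0 \<and> orbit p 0 \<noteq> {0..<Suc n}}.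
            of_int (sign p) * det (edge_mat n A w p)) = 0"
proof (rule edge_sum_eq_zero_by_cycle_reversal[OF A, where c = "\<lambda>p. Min ({0..<Suc n} - orbit p 0)"])
  let ?V = "{0..<Suc n}"
  let ?P = "{p. p permutes ?V \<and> p n = 0 \<and> orbit p 0 \<noteq> ?V}"
  have fin: "finite ?V" by simp
  show "finite ?P" by (rule finite_subset[OF _ finite_permutations[OF fin]]) auto
  fix p assume "p \<in> ?P"
  then have p: "p permutes ?V" and pn: "p n = 0" and o: "orbit p 0 \<noteq> ?V" by auto
  define c where "c = Min (?V - orbit p 0)"
  have "?V - orbit p 0 \<noteq> {}" using permutes_orbit_subset[OF p, of 0] o by auto
  then have "c \<in> ?V - orbit p 0" unfolding c_def by (intro Min_in) auto
  then have cV: "c \<in> ?V" and c0: "c \<notin> orbit p 0" by auto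
  have "0 \<notin> orbit p c"
    using c0 orbit_swap[OF self_in_orbit[OF p fin]] by blast
  then have disjoint: "orbit p 0 \<inter> orbit p c = {}" by (rule orbit_disjoint[OF p fin])
  have "n \<in> orbit p 0"
    using orbit_swap[OF self_in_orbit[OF p fin], of 0 n] orbit.base[of p n] pn by simp
  then show "orbit p (Min (?V - orbit p 0)) \<subseteq> {0..<n}"
    unfolding c_def[symmetric] using disjoint permutes_orbit_subset[OF p cV] by (auto simp: atLeastLessThanSuc)
  have same: "orbit (reverse_cycle p c) 0 = orbit p 0"
    by (rule orbit_reverse_cycle_other[OF p fin \<open>0 \<notin> orbit p c\<close>])
  show "Min (?V - orbit (reverse_cycle p (Min (?V - orbit p 0))) 0) = Min (?V - orbit p 0)"
    using same by (simp flip: c_def)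
  have "reverse_cycle p c n = p n"
    using \<open>n \<in> orbit p 0\<close> disjoint by (auto simp: reverse_cycle_def)
  then show "reverse_cycle p (Min (?V - orbit p 0)) \<in> ?P"
    using reverse_cycle_permutes[OF p fin cV] pn same o by (simp flip: c_def)
  show "p permutes ?V" by (rule p)
qed

text \<open>For fixed \<open>e\<close>, the sum of the edge determinants over all \<open>p\<close> with \<open>p n = e\<close> factors into a
  scalar independent of \<open>e\<close> and the determinant of the frame \<open>[w 0 \<dots> w n]\<close> completed by the unit
  row \<open>e\<^sub>e\<close>: expanding \<open>det (edge_mat n A w p)\<close> over the assignment \<open>\<mu>\<close> of forms to rows and
  exchanging the sums gives, for each \<open>\<mu>\<close>, the determinant of \<open>form_mat n A w \<mu> * frame_mat n w e\<close>.\<close>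

definition form_mat :: "nat \<Rightarrow> (nat \<Rightarrow> 'a::comm_ring_1 mat) \<Rightarrow> (nat \<Rightarrow> nat \<Rightarrow> 'a) \<Rightarrow> (nat \<Rightarrow> nat) \<Rightarrow> 'a mat" where
  "form_mat n A w \<mu> = mat (Suc n) (Suc n) (\<lambda>(r,x).
     if r < n then (if x < n then row_mult n (w r) (A (\<mu> r)) x else 0) else (if x = n then 1 else 0))"

definition frame_mat :: "nat \<Rightarrow> (nat \<Rightarrow> nat \<Rightarrow> 'a::comm_ring_1) \<Rightarrow> nat \<Rightarrow> 'a mat" where
  "frame_mat n w e = mat (Suc n) (Suc n) (\<lambda>(x,c). if x < n then w c x else (if c = e then 1 else 0))"

definition mixed_form_det :: "nat \<Rightarrow> (nat \<Rightarrow> 'a::comm_ring_1 mat) \<Rightarrow> (nat \<Rightarrow> nat \<Rightarrow> 'a) \<Rightarrow> 'a" where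
  "mixed_form_det n A w = (\<Sum>\<mu>\<in>{\<mu>. \<mu> permutes {0..<n}}. of_int (sign \<mu>) * det (form_mat n A w \<mu>))"

lemma form_mat_mult_frame_mat:
  assumes r: "r < Suc n" and c: "c < Suc n"
  shows "(form_mat n A w \<mu> * frame_mat n w e) $$ (r,c)
    = (if r < n then bilin n (A (\<mu> r)) (w r) (w c) else (if c = e then 1 else 0))"
proof -
  have "(form_mat n A w \<mu> * frame_mat n w e) $$ (r,c)
      = (\<Sum>x<n. form_mat n A w \<mu> $$ (r,x) * frame_mat n w e $$ (x,c))
        + form_mat n A w \<mu> $$ (r,n) * frame_mat n w e $$ (n,c)"
    using r c by (simp add: form_mat_def frame_mat_def scalar_prod_def lessThan_atLeast0)
  also have "\<dots> = (if r < n then bilin n (A (\<mu> r)) (w r) (w c) else (if c = e then 1 else 0))"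
  proof (cases "r < n")
    case True
    then have "(\<Sum>x<n. form_mat n A w \<mu> $$ (r,x) * frame_mat n w e $$ (x,c))
        = (\<Sum>x<n. row_mult n (w r) (A (\<mu> r)) x * w c x)"
      using c by (intro sum.cong) (auto simp: form_mat_def frame_mat_def)
    then show ?thesis using True c by (simp add: form_mat_def frame_mat_def bilin_eq_row_mult)
  next
    case False
    then have "r = n" using r by simp
    then show ?thesis using c by (simp add: form_mat_def frame_mat_def)
  qed
  finally show ?thesis .
qed

lemma det_form_mat_mult_frame_mat:
  "det (form_mat n A w \<mu> * frame_mat n w e) = (\<Sum>p\<in>{p. p permutes {0..<Suc n} \<and> p n = e}.
      of_int (sign p) * (\<Prod>r\<in>{0..<n}. bilin n (A (\<mu> r)) (w r) (w (p r))))"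
proof -
  let ?M = "form_mat n A w \<mu> * frame_mat n w e"
  have M: "?M \<in> carrier_mat (Suc n) (Suc n)"
    by (rule mult_carrier_mat[of _ "Suc n" "Suc n"]) (simp_all add: form_mat_def frame_mat_def)
  have "det ?M = (\<Sum>p\<in>{p. p permutes {0..<Suc n}}.
      if p n = e then of_int (sign p) * (\<Prod>r\<in>{0..<n}. bilin n (A (\<mu> r)) (w r) (w (p r))) else 0)"
    unfolding det_def'[OF M]
  proof (rule sum.cong[OF refl])
    fix p assume "p \<in> {p. p permutes {0..<Suc n}}"
    then have p: "i < Suc n \<Longrightarrow> p i < Suc n" for i using permutes_in_image by fastforce
    have "(\<Prod>i = 0..<Suc n. ?M $$ (i, p i))
        = (\<Prod>r\<in>{0..<n}. bilin n (A (\<mu> r)) (w r) (w (p r))) * (if p n = e then 1 else 0)"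
      by (simp add: form_mat_mult_frame_mat p)
    then show "signof p * (\<Prod>i = 0..<Suc n. ?M $$ (i, p i)) =
       (if p n = e then of_int (sign p) * (\<Prod>r\<in>{0..<n}. bilin n (A (\<mu> r)) (w r) (w (p r))) else 0)"
      by simp
  qed
  also have "\<dots> = (\<Sum>p\<in>{p. p permutes {0..<Suc n} \<and> p n = e}.
      of_int (sign p) * (\<Prod>r\<in>{0..<n}. bilin n (A (\<mu> r)) (w r) (w (p r))))"
    by (simp add: sum.If_cases finite_permutations Int_def conj_commute)
  finally show ?thesis .
qed

lemma edge_sum_factor:
  "(\<Sum>p\<in>{p. p permutes {0..<Suc n} \<and> p n = e}. of_int (sign p) * det (edge_mat n A w p))
    = mixed_form_det n A w * det (frame_mat n w e)"
proof -
  let ?P = "{p. p permutes {0..<Suc n} \<and> p n = e}" and ?M = "{\<mu>. \<mu> permutes {0..<n}}"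
  let ?t = "\<lambda>p \<mu>. of_int (sign p) * (of_int (sign \<mu>) * (\<Prod>r\<in>{0..<n}. bilin n (A (\<mu> r)) (w r) (w (p r))))"
  have "det (edge_mat n A w p) = (\<Sum>\<mu>\<in>?M. of_int (sign \<mu>) * (\<Prod>r\<in>{0..<n}. bilin n (A (\<mu> r)) (w r) (w (p r))))"
    for p unfolding det_def'[OF edge_mat_carrier]
    by (intro sum.cong refl) (auto simp: edge_mat_def permutes_in_image intro!: prod.cong)
  then have "(\<Sum>p\<in>?P. of_int (sign p) * det (edge_mat n A w p)) = (\<Sum>p\<in>?P. \<Sum>\<mu>\<in>?M. ?t p \<mu>)"
    by (simp add: sum_distrib_left)
  also have "\<dots> = (\<Sum>\<mu>\<in>?M. of_int (sign \<mu>) * det (form_mat n A w \<mu> * frame_mat n w e))"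
    by (subst sum.swap) (simp add: det_form_mat_mult_frame_mat sum_distrib_left ac_simps)
  also have "\<dots> = (\<Sum>\<mu>\<in>?M. of_int (sign \<mu>) * det (form_mat n A w \<mu>) * det (frame_mat n w e))"
    by (intro sum.cong refl) (simp add: det_mult[of _ "Suc n"] form_mat_def frame_mat_def)
  finally show ?thesis by (simp add: mixed_form_det_def sum_distrib_right)
qed

section \<open>Path sums\<close>

definition cyclic_shift :: "nat \<Rightarrow> nat \<Rightarrow> nat" where
  "cyclic_shift n = (\<lambda>k. if k < n then Suc k else if k = n then 0 else k)"

definition cyclic_unshift :: "nat \<Rightarrow> nat \<Rightarrow> nat" where
  "cyclic_unshift n = (\<lambda>k. if k = 0 then n else if k \<le> n then k - 1 else k)"

lemma cyclic_unshift_permutes: "cyclic_unshift n permutes {0..<Suc n}"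
  by (rule bij_imp_permutes, rule bij_betw_byWitness[where f' = "cyclic_shift n"])
     (auto simp: cyclic_unshift_def cyclic_shift_def)

lemma cyclic_shift_unshift: "cyclic_shift n \<circ> cyclic_unshift n = id"
  by (rule ext) (auto simp: cyclic_unshift_def cyclic_shift_def)

lemma cyclic_unshift_shift: "cyclic_unshift n \<circ> cyclic_shift n = id"
  by (rule ext) (auto simp: cyclic_unshift_def cyclic_shift_def)

lemma cyclic_shift_permutes: "cyclic_shift n permutes {0..<Suc n}"
  by (rule bij_imp_permutes, rule bij_betw_byWitness[where f' = "cyclic_unshift n"])
     (auto simp: cyclic_unshift_def cyclic_shift_def)

definition end_fixing_perms :: "nat \<Rightarrow> (nat \<Rightarrow> nat) set" where
  "end_fixing_perms n = {r. r permutes {0..<Suc n} \<and> r 0 = 0 \<and> r n = n}"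

definition path_mat :: "nat \<Rightarrow> (nat \<Rightarrow> 'a::comm_ring_1 mat) \<Rightarrow> (nat \<Rightarrow> nat \<Rightarrow> 'a) \<Rightarrow> (nat \<Rightarrow> nat) \<Rightarrow> 'a mat" where
  "path_mat n A w r = mat n n (\<lambda>(k,m). bilin n (A m) (w (r k)) (w (r (Suc k))))"

lemma path_mat_carrier [simp]: "path_mat n A w r \<in> carrier_mat n n"
  by (simp add: path_mat_def)

lemma det_path_mat:
  "det (path_mat n A w r)
    = (\<Sum>\<sigma>\<in>{\<sigma>. \<sigma> permutes {0..<n}}. of_int (sign \<sigma>) * (\<Prod>k\<in>{0..<n}. bilin n (A (\<sigma> k)) (w (r k)) (w (r (Suc k)))))"
  unfolding det_def'[OF path_mat_carrier]
  by (intro sum.cong refl) (auto simp: path_mat_def permutes_in_image intro!: prod.cong)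

definition path_sum :: "nat \<Rightarrow> (nat \<Rightarrow> 'a::comm_ring_1 mat) \<Rightarrow> (nat \<Rightarrow> nat \<Rightarrow> 'a) \<Rightarrow> 'a" where
  "path_sum n A w = (\<Sum>r\<in>end_fixing_perms n. of_int (sign r) * det (path_mat n A w r))"

text \<open>Closing the path \<open>0 = r 0, r 1, \<dots>, r n = n\<close> by the edge \<open>n \<rightarrow> 0\<close> gives a cycle through
  all vertices; conversely the path is read off from the powers of the cycle at \<open>0\<close>.\<close>

definition cycle_of_path :: "nat \<Rightarrow> (nat \<Rightarrow> nat) \<Rightarrow> nat \<Rightarrow> nat" where
  "cycle_of_path n r = r \<circ> cyclic_shift n \<circ> Hilbert_Choice.inv r"

definition path_of_cycle :: "nat \<Rightarrow> (nat \<Rightarrow> nat) \<Rightarrow> nat \<Rightarrow> nat" where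
  "path_of_cycle n p = (\<lambda>k. if k \<le> n then (p ^^ k) 0 else k)"

definition hamiltonian_cycles :: "nat \<Rightarrow> (nat \<Rightarrow> nat) set" where
  "hamiltonian_cycles n = {p. p permutes {0..<Suc n} \<and> p n = 0 \<and> orbit p 0 = {0..<Suc n}}"

lemma end_fixing_perms_permutes: "r \<in> end_fixing_perms n \<Longrightarrow> r permutes {0..<n}"
proof -
  assume "r \<in> end_fixing_perms n"
  then have rp: "r permutes {0..<Suc n}" and rn: "r n = n" by (auto simp: end_fixing_perms_def)
  show "r permutes {0..<n}"
  proof (rule permutes_superset[OF rp])
    fix x assume "x \<in> {0..<Suc n} - {0..<n}"
    then have "x = n" by auto
    then show "r x = x" using rn by simp
  qed
qed

lemma cycle_of_path_permutes: "r \<in> end_fixing_perms n \<Longrightarrow> cycle_of_path n r permutes {0..<Suc n}"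
  unfolding cycle_of_path_def end_fixing_perms_def
  by (auto intro!: permutes_compose cyclic_shift_permutes permutes_inv)

lemma cycle_of_path_step: "r \<in> end_fixing_perms n \<Longrightarrow> k < n \<Longrightarrow> cycle_of_path n r (r k) = r (Suc k)"
  unfolding cycle_of_path_def end_fixing_perms_def by (auto simp: permutes_inverses(2) cyclic_shift_def)

lemma cycle_of_path_funpow:
  assumes r: "r \<in> end_fixing_perms n"
  shows "k \<le> n \<Longrightarrow> (cycle_of_path n r ^^ k) 0 = r k"
proof (induct k)
  case 0 then show ?case using r by (simp add: end_fixing_perms_def)
next
  case (Suc k)
  then have "(cycle_of_path n r ^^ Suc k) 0 = cycle_of_path n r (r k)" by simp
  also have "\<dots> = r (Suc k)" using Suc r by (intro cycle_of_path_step) auto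
  finally show ?case .
qed

lemma cycle_of_path_hamiltonian:
  assumes r: "r \<in> end_fixing_perms n"
  shows "cycle_of_path n r \<in> hamiltonian_cycles n"
proof -
  have rp: "r permutes {0..<Suc n}" and r0: "r 0 = 0" and rn: "r n = n" using r by (auto simp: end_fixing_perms_def)
  have p: "cycle_of_path n r permutes {0..<Suc n}" by (rule cycle_of_path_permutes[OF r])
  have irn: "Hilbert_Choice.inv r n = n" using rn by (simp add: permutes_inv_eq[OF rp])
  have pn: "cycle_of_path n r n = 0" using irn r0 by (simp add: cycle_of_path_def cyclic_shift_def)
  have perm: "permutation (cycle_of_path n r)" using p by (auto simp: permutation_permutes)
  have "orbit (cycle_of_path n r) 0 \<subseteq> {0..<Suc n}" by (rule permutes_orbit_subset[OF p]) simp
  moreover have "{0..<Suc n} \<subseteq> orbit (cycle_of_path n r) 0"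
  proof
    fix x assume x: "x \<in> {0..<Suc n}"
    define k where "k = Hilbert_Choice.inv r x"
    have kx: "r k = x" unfolding k_def by (rule permutes_inverses(1)[OF rp])
    have "k \<in> {0..<Suc n}" using x kx permutes_in_image[OF rp, of k] by simp
    then have "(cycle_of_path n r ^^ k) 0 = x" using cycle_of_path_funpow[OF r, of k] kx by simp
    then show "x \<in> orbit (cycle_of_path n r) 0" unfolding orbit_altdef_permutation[OF perm] by blast
  qed
  ultimately show ?thesis using p pn by (auto simp: hamiltonian_cycles_def)
qed

lemma path_of_cycle_of_path:
  assumes r: "r \<in> end_fixing_perms n"
  shows "path_of_cycle n (cycle_of_path n r) = r"
proof
  fix k
  have rp: "r permutes {0..<Suc n}" using r by (simp add: end_fixing_perms_def)
  show "path_of_cycle n (cycle_of_path n r) k = r k"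
  proof (cases "k \<le> n")
    case True then show ?thesis using cycle_of_path_funpow[OF r True] by (simp add: path_of_cycle_def)
  next
    case False
    then have "k \<notin> {0..<Suc n}" by simp
    then have "r k = k" using rp by (simp add: permutes_def)
    then show ?thesis using False by (simp add: path_of_cycle_def)
  qed
qed

context
  fixes n p assumes p: "p \<in> hamiltonian_cycles n"
begin

private lemma p_permutes: "p permutes {0..<Suc n}" using p by (simp add: hamiltonian_cycles_def)
private lemma p_last: "p n = 0" using p by (simp add: hamiltonian_cycles_def)
private lemma p_orbit: "orbit p 0 = {0..<Suc n}" using p by (simp add: hamiltonian_cycles_def)
private lemma p_permutation: "permutation p" using p_permutes by (auto simp: permutation_permutes)

private lemma funpow_in_vertices: "(p ^^ k) 0 \<in> {0..<Suc n}"
  using p_orbit orbit_altdef_permutation[OF p_permutation, of 0] by blast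

private lemma inj_on_funpow: "inj_on (\<lambda>k. (p ^^ k) 0) {0..n}"
proof (rule inj_onI, rule ccontr)
  fix i j assume i: "i \<in> {0..n}" and j: "j \<in> {0..n}" and e: "(p ^^ i) 0 = (p ^^ j) 0" and ne: "i \<noteq> j"
  have injp: "inj p" using p_permutes by (rule permutes_inj)
  have "\<exists>d. 0 < d \<and> d \<le> n \<and> (p ^^ d) 0 = 0"
  proof (cases "i < j")
    case True
    then show ?thesis using funpow_diff[OF injp _ e] i j by (intro exI[of _ "j - i"]) auto
  next
    case False
    then have "j < i" using ne by simp
    then show ?thesis using funpow_diff[OF injp _ e[symmetric]] i j by (intro exI[of _ "i - j"]) auto
  qed
  then obtain d where d: "0 < d" "d \<le> n" "(p ^^ d) 0 = 0" by blast
  have "orbit p 0 = {(p ^^ m) 0 | m. m < d}" by (rule orbit_altdef_bounded[OF d(3) d(1)])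
  also have "\<dots> = (\<lambda>m. (p ^^ m) 0) ` {..<d}" by auto
  finally have "card (orbit p 0) \<le> d" using card_image_le[of "{..<d}" "\<lambda>m. (p ^^ m) 0"] by simp
  then show False using p_orbit d(2) by simp
qed

private lemma funpow_image: "(\<lambda>k. (p ^^ k) 0) ` {0..n} = {0..<Suc n}"
proof (rule card_subset_eq)
  show "finite {0..<Suc n}" by simp
  show "(\<lambda>k. (p ^^ k) 0) ` {0..n} \<subseteq> {0..<Suc n}" using funpow_in_vertices by auto
  show "card ((\<lambda>k. (p ^^ k) 0) ` {0..n}) = card {0..<Suc n}"
    using card_image[OF inj_on_funpow] by simp
qed

private lemma funpow_last: "(p ^^ n) 0 = n"
proof -
  have "n \<in> (\<lambda>k. (p ^^ k) 0) ` {0..n}" using funpow_image by simp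
  then obtain k where k: "k \<le> n" "(p ^^ k) 0 = n" by auto
  show ?thesis
  proof (cases "k = n")
    case True then show ?thesis using k by simp
  next
    case False
    then have "Suc k \<le> n" using k by simp
    have "(p ^^ Suc k) 0 = (p ^^ 0) 0" using k p_last by simp
    then have "Suc k = 0" using inj_onD[OF inj_on_funpow _ _ _] \<open>Suc k \<le> n\<close> by (metis atLeastAtMost_iff le0)
    then show ?thesis by simp
  qed
qed

lemma path_of_cycle_end_fixing: "path_of_cycle n p \<in> end_fixing_perms n"
proof -
  have "path_of_cycle n p permutes {0..<Suc n}"
  proof (rule bij_imp_permutes)
    have "bij_betw (\<lambda>k. (p ^^ k) 0) {0..n} {0..<Suc n}"
      using inj_on_funpow funpow_image by (simp add: bij_betw_def)
    moreover have "{0..n} = {0..<Suc n}" by auto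
    ultimately have "bij_betw (\<lambda>k. (p ^^ k) 0) {0..<Suc n} {0..<Suc n}" by simp
    then show "bij_betw (path_of_cycle n p) {0..<Suc n} {0..<Suc n}"
      by (rule bij_betw_cong[THEN iffD1, rotated]) (auto simp: path_of_cycle_def)
    show "path_of_cycle n p x = x" if "x \<notin> {0..<Suc n}" for x using that by (simp add: path_of_cycle_def)
  qed
  then show ?thesis using funpow_last by (simp add: end_fixing_perms_def path_of_cycle_def)
qed

lemma cycle_of_path_of_cycle: "cycle_of_path n (path_of_cycle n p) = p"
proof -
  let ?q = "path_of_cycle n p"
  have qp: "?q permutes {0..<Suc n}" using path_of_cycle_end_fixing by (simp add: end_fixing_perms_def)
  have qn: "?q n = n" using path_of_cycle_end_fixing by (simp add: end_fixing_perms_def)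
  have comm: "?q \<circ> cyclic_shift n = p \<circ> ?q"
  proof
    fix k show "(?q \<circ> cyclic_shift n) k = (p \<circ> ?q) k"
    proof (cases "k < n")
      case True then show ?thesis by (simp add: cyclic_shift_def path_of_cycle_def)
    next
      case False
      show ?thesis
      proof (cases "k = n")
        case True then show ?thesis using qn p_last by (simp add: cyclic_shift_def path_of_cycle_def)
      next
        case False
        with \<open>\<not> k < n\<close> have "k \<notin> {0..<Suc n}" by simp
        then show ?thesis using \<open>\<not> k < n\<close> False p_permutes by (simp add: cyclic_shift_def path_of_cycle_def permutes_def)
      qed
    qed
  qed
  have "cycle_of_path n ?q = p \<circ> ?q \<circ> Hilbert_Choice.inv ?q" unfolding cycle_of_path_def comm ..
  also have "\<dots> = p" by (simp add: comp_assoc permutes_inv_o(1)[OF qp])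
  finally show ?thesis .
qed

end

lemma sign_cycle_of_path:
  assumes r: "r \<in> end_fixing_perms n"
  shows "sign (cycle_of_path n r) = sign (cyclic_shift n)"
proof -
  have rp: "r permutes {0..<Suc n}" using r by (simp add: end_fixing_perms_def)
  have pr: "permutation r" using rp by (auto simp: permutation_permutes)
  have pc: "permutation (cyclic_shift n)" using cyclic_shift_permutes by (auto simp: permutation_permutes)
  have pi: "permutation (Hilbert_Choice.inv r)" using pr by (simp add: permutation_inverse)
  have "sign (cycle_of_path n r) = sign (r \<circ> cyclic_shift n) * sign (Hilbert_Choice.inv r)"
    unfolding cycle_of_path_def by (rule sign_compose[OF permutation_compose[OF pr pc] pi])
  also have "\<dots> = sign (cyclic_shift n) * (sign r * sign r)"
    by (simp add: sign_compose[OF pr pc] sign_inverse[OF pr])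
  finally show ?thesis by simp
qed

lemma path_mat_eq_permuted_edge_mat:
  assumes r: "r \<in> end_fixing_perms n"
  shows "path_mat n A w r = mat n n (\<lambda>(k,m). edge_mat n A w (cycle_of_path n r) $$ (r k, m))"
    (is "_ = ?M")
proof (rule eq_matI)
  have rn: "r permutes {0..<n}" by (rule end_fixing_perms_permutes[OF r])
  fix i j assume "i < dim_row ?M" "j < dim_col ?M"
  then have i: "i < n" and j: "j < n" by auto
  have "r i < n" using permutes_in_image[OF rn, of i] i by simp
  then show "path_mat n A w r $$ (i, j) = ?M $$ (i, j)"
    using i j cycle_of_path_step[OF r i] by (simp add: path_mat_def edge_mat_def)
qed (auto simp: path_mat_def)

lemma path_sum_eq_hamiltonian_sum:
  "path_sum n A w = of_int (sign (cyclic_shift n)) * (\<Sum>p\<in>hamiltonian_cycles n. of_int (sign p) * det (edge_mat n A w p))"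
proof -
  have "path_sum n A w = (\<Sum>p\<in>hamiltonian_cycles n. of_int (sign (cyclic_shift n)) * (of_int (sign p) * det (edge_mat n A w p)))"
    unfolding path_sum_def
  proof (rule sum.reindex_bij_witness[where j="cycle_of_path n" and i="path_of_cycle n"])
    fix r assume r: "r \<in> end_fixing_perms n"
    show "path_of_cycle n (cycle_of_path n r) = r" by (rule path_of_cycle_of_path[OF r])
    show "cycle_of_path n r \<in> hamiltonian_cycles n" by (rule cycle_of_path_hamiltonian[OF r])
    have rn: "r permutes {0..<n}" by (rule end_fixing_perms_permutes[OF r])
    have "det (path_mat n A w r) = of_int (sign r) * det (edge_mat n A w (cycle_of_path n r))"
      unfolding path_mat_eq_permuted_edge_mat[OF r] by (rule det_permute_rows[OF edge_mat_carrier rn])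
    then have "of_int (sign r) * det (path_mat n A w r) = det (edge_mat n A w (cycle_of_path n r))"
      by (simp add: mult.assoc[symmetric] flip: of_int_mult)
    moreover have "of_int (sign (cyclic_shift n)) * of_int (sign (cycle_of_path n r)) = (1::'a)"
      using sign_cycle_of_path[OF r] by (simp flip: of_int_mult)
    ultimately show "of_int (sign (cyclic_shift n)) * (of_int (sign (cycle_of_path n r)) * det (edge_mat n A w (cycle_of_path n r)))
       = of_int (sign r) * det (path_mat n A w r)"
      by (simp add: mult.assoc[symmetric])
  next
    fix p assume p: "p \<in> hamiltonian_cycles n"
    show "cycle_of_path n (path_of_cycle n p) = p" by (rule cycle_of_path_of_cycle[OF p])
    show "path_of_cycle n p \<in> end_fixing_perms n" by (rule path_of_cycle_end_fixing[OF p])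
  qed
  then show ?thesis by (simp add: sum_distrib_left)
qed

definition reverse_vertices :: "nat \<Rightarrow> nat \<Rightarrow> nat" where "reverse_vertices n = (\<lambda>k. if k \<le> n then n - k else k)"

definition reverse_rows :: "nat \<Rightarrow> nat \<Rightarrow> nat" where "reverse_rows n = (\<lambda>k. if k < n then n - Suc k else k)"

lemma reverse_vertices_involutive: "reverse_vertices n (reverse_vertices n k) = k"
  by (simp add: reverse_vertices_def)

lemma reverse_vertices_permutes: "reverse_vertices n permutes {0..<Suc n}"
  by (rule bij_imp_permutes, rule bij_betw_byWitness[where f'="reverse_vertices n"]) (auto simp: reverse_vertices_def)

lemma reverse_rows_permutes: "reverse_rows n permutes {0..<n}"
  by (rule bij_imp_permutes, rule bij_betw_byWitness[where f'="reverse_rows n"]) (auto simp: reverse_rows_def)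

lemma end_fixing_perms_conj_reverse:
  assumes r: "r \<in> end_fixing_perms n"
  shows "reverse_vertices n \<circ> r \<circ> reverse_vertices n \<in> end_fixing_perms n"
proof -
  have rp: "r permutes {0..<Suc n}" and r0: "r 0 = 0" and rn: "r n = n" using r by (auto simp: end_fixing_perms_def)
  have "reverse_vertices n \<circ> r \<circ> reverse_vertices n permutes {0..<Suc n}"
    by (intro permutes_compose reverse_vertices_permutes rp)
  moreover have "(reverse_vertices n \<circ> r \<circ> reverse_vertices n) 0 = 0" using rn by (simp add: reverse_vertices_def)
  moreover have "(reverse_vertices n \<circ> r \<circ> reverse_vertices n) n = n" using r0 by (simp add: reverse_vertices_def)
  ultimately show ?thesis by (simp add: end_fixing_perms_def)
qed

lemma sign_conj_reverse_vertices:
  assumes r: "r \<in> end_fixing_perms n"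
  shows "sign (reverse_vertices n \<circ> r \<circ> reverse_vertices n) = sign r"
proof -
  have pr: "permutation r" using r by (auto simp: end_fixing_perms_def permutation_permutes)
  have pv: "permutation (reverse_vertices n)" using reverse_vertices_permutes by (auto simp: permutation_permutes)
  have "sign (reverse_vertices n \<circ> r \<circ> reverse_vertices n) = sign (reverse_vertices n) * sign r * sign (reverse_vertices n)"
    by (simp add: sign_compose permutation_compose pr pv)
  then show ?thesis by simp
qed

text \<open>Traversing a path backwards along the reversed vertex labelling gives the same edges with
  the opposite orientation, in the opposite order.\<close>

lemma det_path_mat_reverse:
  assumes A: "\<And>m. m < n \<Longrightarrow> A m \<in> carrier_mat n n \<and> alternating_mat (A m)"
    and r: "r \<in> end_fixing_perms n"
  shows "det (path_mat n A (\<lambda>k. w (reverse_vertices n k)) (reverse_vertices n \<circ> r \<circ> reverse_vertices n))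
    = (-1) ^ n * of_int (sign (reverse_rows n)) * det (path_mat n A w r)"
proof -
  let ?w' = "\<lambda>k. w (reverse_vertices n k)" and ?r' = "reverse_vertices n \<circ> r \<circ> reverse_vertices n"
  have r_perm: "r permutes {0..<Suc n}" using r by (simp add: end_fixing_perms_def)
  have rin: "r k \<le> n" if "k \<le> n" for k using permutes_in_image[OF r_perm, of k] that by simp
  have "path_mat n A ?w' ?r' = mat n n (\<lambda>(k,m). (-1) * path_mat n A w r $$ (reverse_rows n k, m))"
    (is "_ = ?M")
  proof (rule eq_matI)
    fix k m assume "k < dim_row ?M" "m < dim_col ?M"
    then have k: "k < n" and m: "m < n" by auto
    have "path_mat n A ?w' ?r' $$ (k, m) = bilin n (A m) (w (r (Suc (n - Suc k)))) (w (r (n - Suc k)))"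
      using k m rin[of "n - k"] rin[of "n - Suc k"]
      by (simp add: path_mat_def reverse_vertices_def Suc_diff_Suc)
    also have "\<dots> = - bilin n (A m) (w (r (n - Suc k))) (w (r (Suc (n - Suc k))))"
      using bilin_swap_alternating A[OF m] by blast
    also have "\<dots> = (-1) * path_mat n A w r $$ (reverse_rows n k, m)"
      using k m by (simp add: path_mat_def reverse_rows_def)
    finally show "path_mat n A ?w' ?r' $$ (k, m) = ?M $$ (k, m)"
      using k m by simp
  qed (auto simp: path_mat_def)
  then show ?thesis
    using det_scale_permute_rows[OF path_mat_carrier reverse_rows_permutes, where s = "\<lambda>_. -1"]
    by (simp add: mult.assoc)
qed

lemma path_sum_reverse:
  assumes A: "\<And>m. m < n \<Longrightarrow> A m \<in> carrier_mat n n \<and> alternating_mat (A m)"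
  shows "path_sum n A (\<lambda>k. w (reverse_vertices n k)) = (-1) ^ n * of_int (sign (reverse_rows n)) * path_sum n A w"
proof -
  let ?conj = "\<lambda>r. reverse_vertices n \<circ> r \<circ> reverse_vertices n"
  have "path_sum n A (\<lambda>k. w (reverse_vertices n k))
      = (\<Sum>r\<in>end_fixing_perms n. of_int (sign r) * ((-1) ^ n * of_int (sign (reverse_rows n)) * det (path_mat n A w r)))"
    unfolding path_sum_def
  proof (rule sym, rule sum.reindex_bij_witness[where i = ?conj and j = ?conj])
    fix r assume r: "r \<in> end_fixing_perms n"
    show "?conj (?conj r) = r" by (simp add: o_def reverse_vertices_involutive)
    show "?conj r \<in> end_fixing_perms n" by (rule end_fixing_perms_conj_reverse[OF r])
    show "of_int (sign (?conj r)) * det (path_mat n A (\<lambda>k. w (reverse_vertices n k)) (?conj r))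
        = of_int (sign r) * ((-1) ^ n * of_int (sign (reverse_rows n)) * det (path_mat n A w r))"
      by (simp add: det_path_mat_reverse[where A = A, OF A r] sign_conj_reverse_vertices[OF r])
  qed (simp add: o_def reverse_vertices_involutive, simp add: end_fixing_perms_conj_reverse)
  then show ?thesis by (simp add: path_sum_def sum_distrib_left ac_simps)
qed

lemma det_frame_mat_reverse:
  "det (frame_mat n (\<lambda>k. w (reverse_vertices n k)) 0) = of_int (sign (reverse_vertices n)) * det (frame_mat n w n)"
proof -
  have eq: "frame_mat n (\<lambda>k. w (reverse_vertices n k)) 0
      = mat (Suc n) (Suc n) (\<lambda>(i,j). frame_mat n w n $$ (i, reverse_vertices n j))" (is "_ = ?M")
  proof (rule eq_matI)
    fix i j assume "i < dim_row ?M" "j < dim_col ?M"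
    then have i: "i < Suc n" and j: "j < Suc n" by auto
    have "reverse_vertices n j < Suc n" using j by (simp add: reverse_vertices_def)
    moreover have "(reverse_vertices n j = n) = (j = 0)" using j by (auto simp: reverse_vertices_def)
    ultimately show "frame_mat n (\<lambda>k. w (reverse_vertices n k)) 0 $$ (i, j) = ?M $$ (i, j)"
      using i j by (simp add: frame_mat_def)
  qed (auto simp: frame_mat_def)
  show ?thesis unfolding eq by (rule det_permute_cols) (auto simp: frame_mat_def reverse_vertices_permutes)
qed

lemma path_sum_factor:
  fixes A :: "nat \<Rightarrow> 'a::{idom, ring_char_0} mat"
  assumes A: "\<And>m. m < n \<Longrightarrow> A m \<in> carrier_mat n n \<and> alternating_mat (A m)"
  shows "path_sum n A w = of_int (sign (cyclic_shift n)) * (mixed_form_det n A w * det (frame_mat n w 0))"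
proof -
  let ?V = "{0..<Suc n}"
  let ?f = "\<lambda>p. of_int (sign p) * det (edge_mat n A w p)"
  let ?X2 = "{p. p permutes ?V \<and> p n = 0 \<and> orbit p 0 \<noteq> ?V}"
  have fin: "finite {p. p permutes ?V \<and> p n = 0}"
    by (rule finite_subset[OF _ finite_permutations[of ?V]]) auto
  have split: "{p. p permutes ?V \<and> p n = 0} = hamiltonian_cycles n \<union> ?X2" by (auto simp: hamiltonian_cycles_def)
  have "sum ?f {p. p permutes ?V \<and> p n = 0} = sum ?f (hamiltonian_cycles n) + sum ?f ?X2"
    unfolding split by (rule sum.union_disjoint) (use fin split in \<open>auto simp: hamiltonian_cycles_def\<close>)
  also have "sum ?f ?X2 = 0" by (rule edge_sum_broken_cycles_eq_zero[OF A])
  finally have "sum ?f (hamiltonian_cycles n) = mixed_form_det n A w * det (frame_mat n w 0)"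
    using edge_sum_factor[where n = n and e = 0 and A = A and w = w] by simp
  then show ?thesis by (simp add: path_sum_eq_hamiltonian_sum)
qed

text \<open>The path sum is a multiple of the frame determinant with unit row \<open>e\<^sub>0\<close>, the cancellation
  of \<open>edge_sum_fixed_last_eq_zero\<close> kills the same scalar against the frame with unit row \<open>e\<^sub>n\<close>, and
  reversing the order of the vertices exchanges the two frames.\<close>

lemma path_sum_eq_zero:
  fixes A :: "nat \<Rightarrow> 'a::{idom, ring_char_0} mat"
  assumes n: "n \<ge> 1" and A: "\<And>m. m < n \<Longrightarrow> A m \<in> carrier_mat n n \<and> alternating_mat (A m)"
  shows "path_sum n A w = 0"
proof -
  let ?w' = "\<lambda>k. w (reverse_vertices n k)"
  have killed: "mixed_form_det n A w * det (frame_mat n w n) = 0"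
    using edge_sum_fixed_last_eq_zero[where A = A, OF n A, of w] edge_sum_factor[where e = n and A = A and w = w]
    by simp
  show ?thesis
  proof (cases "mixed_form_det n A w = 0")
    case True
    then show ?thesis by (simp add: path_sum_factor[where A = A, OF A])
  next
    case False
    with killed have "det (frame_mat n w n) = 0" by simp
    then have "path_sum n A ?w' = 0"
      by (simp add: path_sum_factor[where A = A, OF A] det_frame_mat_reverse)
    moreover have "(-1) ^ n * of_int (sign (reverse_rows n)) \<noteq> (0::'a)" by (simp add: sign_def)
    ultimately show ?thesis by (simp add: path_sum_reverse[where A = A, OF A])
  qed
qed

section \<open>Reduction to path sums\<close>

definition lift_perm :: "nat \<Rightarrow> (nat \<Rightarrow> nat) \<Rightarrow> nat \<Rightarrow> nat" where
  "lift_perm n t = cyclic_shift n \<circ> t \<circ> cyclic_unshift n"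

definition unlift_perm :: "nat \<Rightarrow> (nat \<Rightarrow> nat) \<Rightarrow> nat \<Rightarrow> nat" where
  "unlift_perm n r = cyclic_unshift n \<circ> r \<circ> cyclic_shift n"

lemma lift_perm_end_fixing:
  assumes t: "t permutes {0..<N}"
  shows "lift_perm (Suc N) t \<in> end_fixing_perms (Suc N)"
proof -
  have t': "t permutes {0..<Suc (Suc N)}" by (rule permutes_subset[OF t]) auto
  have "lift_perm (Suc N) t permutes {0..<Suc (Suc N)}"
    unfolding lift_perm_def by (intro permutes_compose cyclic_unshift_permutes cyclic_shift_permutes t')
  moreover have "t (Suc N) = Suc N" "t N = N" using t by (auto simp: permutes_def)
  ultimately show ?thesis by (simp add: end_fixing_perms_def lift_perm_def cyclic_unshift_def cyclic_shift_def)
qed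

lemma unlift_perm_permutes:
  assumes r: "r \<in> end_fixing_perms (Suc N)"
  shows "unlift_perm (Suc N) r permutes {0..<N}"
proof -
  have rp: "r permutes {0..<Suc (Suc N)}" and r0: "r 0 = 0" and rn: "r (Suc N) = Suc N"
    using r by (auto simp: end_fixing_perms_def)
  have p: "unlift_perm (Suc N) r permutes {0..<Suc (Suc N)}"
    unfolding unlift_perm_def by (intro permutes_compose cyclic_unshift_permutes cyclic_shift_permutes rp)
  show ?thesis
  proof (rule permutes_superset[OF p])
    fix x assume "x \<in> {0..<Suc (Suc N)} - {0..<N}"
    then have "x = N \<or> x = Suc N" by auto
    then show "unlift_perm (Suc N) r x = x" using r0 rn by (auto simp: unlift_perm_def cyclic_unshift_def cyclic_shift_def)
  qed
qed

lemma lift_unlift_perm: "lift_perm n (unlift_perm n r) = r"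
  unfolding lift_perm_def unlift_perm_def
  by (simp add: comp_assoc cyclic_shift_unshift) (simp add: comp_assoc[symmetric] cyclic_shift_unshift)

lemma unlift_lift_perm: "unlift_perm n (lift_perm n t) = t"
  unfolding lift_perm_def unlift_perm_def
  by (simp add: comp_assoc cyclic_unshift_shift) (simp add: comp_assoc[symmetric] cyclic_unshift_shift)

lemma sign_lift_perm:
  assumes t: "t permutes {0..<N}"
  shows "sign (lift_perm (Suc N) t) = sign t"
proof -
  have pt: "permutation t" using t by (auto simp: permutation_permutes)
  have pc: "permutation (cyclic_shift (Suc N))" using cyclic_shift_permutes by (auto simp: permutation_permutes)
  have pi: "permutation (cyclic_unshift (Suc N))" using cyclic_unshift_permutes by (auto simp: permutation_permutes)
  have "sign (cyclic_shift (Suc N)) * sign (cyclic_unshift (Suc N)) = 1"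
    using sign_compose[OF pc pi] cyclic_shift_unshift[of "Suc N"] by simp
  moreover have "sign (lift_perm (Suc N) t) = sign (cyclic_shift (Suc N)) * sign t * sign (cyclic_unshift (Suc N))"
    unfolding lift_perm_def by (simp add: sign_compose permutation_compose pc pt pi)
  ultimately show ?thesis by (metis mult.commute mult.left_commute mult_1_right)
qed

lemma lift_perm_apply:
  assumes t: "t permutes {0..<N}"
  shows "lift_perm (Suc N) t k = (case k of 0 \<Rightarrow> 0 | Suc m \<Rightarrow> Suc (t m))"
proof -
  have fixed: "t m = m" if "N \<le> m" for m using t that by (auto simp: permutes_def)
  have bounded: "t m \<le> N" if "m \<le> N" for m
    using permutes_in_image[OF t, of m] fixed[of m] that by (cases "m < N") auto
  show ?thesis
  proof (cases k)
    case 0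
    then show ?thesis using fixed[of "Suc N"] by (simp add: lift_perm_def cyclic_unshift_def cyclic_shift_def)
  next
    case (Suc m)
    then show ?thesis using bounded[of m] fixed[of m] fixed[of "Suc m"]
      by (cases "m \<le> N") (simp_all add: lift_perm_def cyclic_unshift_def cyclic_shift_def)
  qed
qed

lemma walk_comp_permutes:
  assumes t: "t permutes {0..<N}" and k: "k \<le> Suc N"
  shows "walk v x y N (h \<circ> t) 0 k = walk v x y N h 0 (lift_perm (Suc N) t k)"
proof (cases k)
  case (Suc m)
  have "t m < N \<longleftrightarrow> m < N" "t N = N" using permutes_in_image[OF t, of m] t by (auto simp: permutes_def)
  then show ?thesis using Suc k by (auto simp: lift_perm_apply[OF t] walk_def less_Suc_eq_le)
qed (simp add: lift_perm_apply[OF t] walk_def)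

lemma path_sum_lift:
  "(\<Sum>\<tau>\<in>{\<tau>. \<tau> permutes {0..<N}}. of_int (sign \<tau>) * det (path_mat (Suc N) A w (lift_perm (Suc N) \<tau>)))
    = path_sum (Suc N) A w"
  unfolding path_sum_def
proof (rule sum.reindex_bij_witness[where j = "lift_perm (Suc N)" and i = "unlift_perm (Suc N)"])
  fix \<tau> assume "\<tau> \<in> {\<tau>. \<tau> permutes {0..<N}}"
  then have \<tau>: "\<tau> permutes {0..<N}" by simp
  show "unlift_perm (Suc N) (lift_perm (Suc N) \<tau>) = \<tau>" by (rule unlift_lift_perm)
  show "lift_perm (Suc N) \<tau> \<in> end_fixing_perms (Suc N)" by (rule lift_perm_end_fixing[OF \<tau>])
  show "of_int (sign (lift_perm (Suc N) \<tau>)) * det (path_mat (Suc N) A w (lift_perm (Suc N) \<tau>))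
      = of_int (sign \<tau>) * det (path_mat (Suc N) A w (lift_perm (Suc N) \<tau>))"
    by (simp add: sign_lift_perm[OF \<tau>])
next
  fix r assume "r \<in> end_fixing_perms (Suc N)"
  then show "lift_perm (Suc N) (unlift_perm (Suc N) r) = r" "unlift_perm (Suc N) r \<in> {\<tau>. \<tau> permutes {0..<N}}"
    by (simp_all add: lift_unlift_perm unlift_perm_permutes)
qed

lemma alt_word_entry_expansion:
  fixes A B :: "nat \<Rightarrow> 'a::field_char_0 mat"
  assumes A: "\<And>k. k < Suc N \<Longrightarrow> A k \<in> carrier_mat n n"
    and B: "\<And>k. k < N \<Longrightarrow> B k \<in> carrier_mat n n \<and> symmetric_mat (B k)"
    and \<sigma>: "\<sigma> permutes {0..<Suc N}" and \<tau>: "\<tau> permutes {0..<N}" and ij: "i < n" "j < n"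
  shows "alt_word A B \<sigma> \<tau> (Suc N) $$ (i,j) =
    (\<Sum>h\<in>PiE {0..<N} (\<lambda>_. polar_index n). (\<Prod>l\<in>{0..<N}. polar_coeff (B l) (h l)) *
      (\<Prod>k\<in>{0..<Suc N}. bilin n (A (\<sigma> k))
         (walk polar_vec (basis_fun i) (basis_fun j) N h 0 (lift_perm (Suc N) \<tau> k))
         (walk polar_vec (basis_fun i) (basis_fun j) N h 0 (lift_perm (Suc N) \<tau> (Suc k)))))"
proof -
  let ?Q = "polar_index n" and ?u = "walk polar_vec (basis_fun i) (basis_fun j) N"
  have A\<sigma>: "A (\<sigma> k) \<in> carrier_mat n n" if "k \<le> N" for k
    using A permutes_in_image[OF \<sigma>, of k] that by simp
  have B\<tau>: "B (\<tau> k) \<in> carrier_mat n n \<and> symmetric_mat (B (\<tau> k))" if "k < N" for k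
    using B permutes_in_image[OF \<tau>, of k] that by simp
  have "alt_word A B \<sigma> \<tau> (Suc N) = alt_word_from (A \<circ> \<sigma>) (B \<circ> \<tau>) N 0"
    by (simp add: alt_word_def alt_word_from_def)
  then have "alt_word A B \<sigma> \<tau> (Suc N) $$ (i,j) = bilin n (alt_word_from (A \<circ> \<sigma>) (B \<circ> \<tau>) N 0) (basis_fun i) (basis_fun j)"
    by (simp add: bilin_basis_fun[OF ij])
  also have "\<dots> = (\<Sum>g\<in>PiE {0..<N} (\<lambda>_. ?Q). (\<Prod>k\<in>{0..<N}. polar_coeff (B (\<tau> k)) (g k)) *
      (\<Prod>k\<in>{0..N}. bilin n (A (\<sigma> k)) (?u g 0 k) (?u g 0 (Suc k))))"
  proof -
    have "(A \<circ> \<sigma>) k \<in> carrier_mat n n" if "k \<le> N" for k using A\<sigma> that by simp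
    moreover have "(B \<circ> \<tau>) k \<in> carrier_mat n n" if "k < N" for k using B\<tau> that by simp
    moreover have "(B \<circ> \<tau>) k $$ (a,b) = (\<Sum>q\<in>?Q. polar_coeff (B (\<tau> k)) q * polar_vec q a * polar_vec q b)"
      if "k < N" "a < n" "b < n" for k a b
      using B\<tau>[OF that(1)] symmetric_mat_polarization[of "B (\<tau> k)" n a b] that by simp
    ultimately show ?thesis by (simp add: bilin_alt_word_from_expansion)
  qed
  also have "\<dots> = (\<Sum>h\<in>PiE {0..<N} (\<lambda>_. ?Q). (\<Prod>k\<in>{0..<N}. polar_coeff (B (\<tau> k)) (h (\<tau> k))) *
      (\<Prod>k\<in>{0..N}. bilin n (A (\<sigma> k)) (?u (h \<circ> \<tau>) 0 k) (?u (h \<circ> \<tau>) 0 (Suc k))))"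
    by (subst sum_PiE_comp_permutes[OF \<tau>]) simp
  also have "\<dots> = (\<Sum>h\<in>PiE {0..<N} (\<lambda>_. ?Q). (\<Prod>l\<in>{0..<N}. polar_coeff (B l) (h l)) *
      (\<Prod>k\<in>{0..<Suc N}. bilin n (A (\<sigma> k)) (?u h 0 (lift_perm (Suc N) \<tau> k)) (?u h 0 (lift_perm (Suc N) \<tau> (Suc k)))))"
  proof (intro sum.cong refl arg_cong2[where f = "(*)"])
    fix h
    show "(\<Prod>k\<in>{0..<N}. polar_coeff (B (\<tau> k)) (h (\<tau> k))) = (\<Prod>l\<in>{0..<N}. polar_coeff (B l) (h l))"
      using prod.permute[OF \<tau>, of "\<lambda>l. polar_coeff (B l) (h l)"] by (simp add: o_def)
    show "(\<Prod>k\<in>{0..N}. bilin n (A (\<sigma> k)) (?u (h \<circ> \<tau>) 0 k) (?u (h \<circ> \<tau>) 0 (Suc k)))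
        = (\<Prod>k\<in>{0..<Suc N}. bilin n (A (\<sigma> k)) (?u h 0 (lift_perm (Suc N) \<tau> k)) (?u h 0 (lift_perm (Suc N) \<tau> (Suc k))))"
      by (auto simp: walk_comp_permutes[OF \<tau>] atLeastLessThanSuc_atLeastAtMost intro!: prod.cong)
  qed
  finally show ?thesis .
qed

theorem theorem5p1:
  fixes n :: nat and A B :: "nat \<Rightarrow> complex mat"
  assumes "n \<ge> 1"
    and "\<And>k. k < n \<Longrightarrow> A k \<in> carrier_mat n n \<and> alternating_mat (A k)"
    and "\<And>k. k < n - 1 \<Longrightarrow> B k \<in> carrier_mat n n \<and> symmetric_mat (B k)"
    and "i < n" and "j < n"
  shows "(\<Sum>\<sigma>\<in>{\<sigma>. \<sigma> permutes {0..<n}}. \<Sum>\<tau>\<in>{\<tau>. \<tau> permutes {0..<n-1}}.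
            of_int (sign \<sigma> * sign \<tau>) * alt_word A B \<sigma> \<tau> n $$ (i, j)) = 0"
proof -
  obtain N where n: "n = Suc N" using assms(1) by (cases n) auto
  then have "n - 1 = N" by simp
  let ?S = "{\<sigma>. \<sigma> permutes {0..<n}}" and ?T = "{\<tau>. \<tau> permutes {0..<N}}"
    and ?H = "PiE {0..<N} (\<lambda>_. polar_index n)"
  let ?c = "\<lambda>h. \<Prod>l\<in>{0..<N}. polar_coeff (B l) (h l)"
    and ?u = "\<lambda>h. walk polar_vec (basis_fun i) (basis_fun j) N h 0"
  let ?P = "\<lambda>\<sigma> \<tau> h. \<Prod>k\<in>{0..<n}. bilin n (A (\<sigma> k)) (?u h (lift_perm n \<tau> k)) (?u h (lift_perm n \<tau> (Suc k)))"
  have A: "\<And>k. k < Suc N \<Longrightarrow> A k \<in> carrier_mat n n" and B: "\<And>k. k < N \<Longrightarrow> B k \<in> carrier_mat n n \<and> symmetric_mat (B k)"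
    using assms(2,3) n by auto
  have entry: "alt_word A B \<sigma> \<tau> n $$ (i, j) = (\<Sum>h\<in>?H. ?c h * ?P \<sigma> \<tau> h)" if "\<sigma> \<in> ?S" "\<tau> \<in> ?T" for \<sigma> \<tau>
    using alt_word_entry_expansion[OF A B _ _ assms(4,5)] that unfolding n by simp
  have "(\<Sum>\<sigma>\<in>?S. \<Sum>\<tau>\<in>{\<tau>. \<tau> permutes {0..<n-1}}. of_int (sign \<sigma> * sign \<tau>) * alt_word A B \<sigma> \<tau> n $$ (i, j))
      = (\<Sum>\<sigma>\<in>?S. \<Sum>\<tau>\<in>?T. \<Sum>h\<in>?H. ?c h * (of_int (sign \<tau>) * (of_int (sign \<sigma>) * ?P \<sigma> \<tau> h)))"
    unfolding \<open>n - 1 = N\<close> by (intro sum.cong refl) (simp add: entry sum_distrib_left ac_simps)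
  also have "\<dots> = (\<Sum>h\<in>?H. \<Sum>\<tau>\<in>?T. \<Sum>\<sigma>\<in>?S. ?c h * (of_int (sign \<tau>) * (of_int (sign \<sigma>) * ?P \<sigma> \<tau> h)))"
    by (rule sum_reverse_nesting3)
  also have "\<dots> = (\<Sum>h\<in>?H. ?c h * (\<Sum>\<tau>\<in>?T. of_int (sign \<tau>) * (\<Sum>\<sigma>\<in>?S. of_int (sign \<sigma>) * ?P \<sigma> \<tau> h)))"
    by (simp add: sum_distrib_left)
  also have "\<dots> = (\<Sum>h\<in>?H. ?c h * path_sum n A (?u h))"
    unfolding n det_path_mat[symmetric] path_sum_lift ..
  also have "\<dots> = 0"
    by (simp add: path_sum_eq_zero[OF assms(1,2)])
  finally show ?thesis .
qed

end
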